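(* Let $k$ be an étale cubic algebra over $\mathbb{Q}$ and $f$ a square free positive integer such that no prime number dividing $f$ is of type $3$ in $k$. Then for each ideal $\mathfrak{f}$ of $\mathcal{O}_k$ with $f\mathcal{O}_k\subset\mathfrak{f}$ and $N(\mathfrak{f})=f^2$, there exists exactly one order $R$ of index $f$ in $\mathcal{O}_k$ whose conductor is $\mathfrak{f}$, namely $R=\mathbb{Z}+\mathfrak{f}$.
   Context: An étale cubic algebra is a direct sum of number fields with total degree $3$; $\mathcal{O}_k$ is its maximal order; an order is a finite-index subring with unit of $\mathcal{O}_k$, and its conductor is the largest $\mathcal{O}_k$-ideal contained in it. $N(\mathfrak{f})=(\mathcal{O}_k:\mathfrak{f})$. A prime $p$ is of type $3$ in $k$ if $k$ is a cubic field in which $p$ is inert (i.e. $p\mathcal{O}_k$ is prime of norm $p^3$). *)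

theory Defs
  imports "HOL-Analysis.Analysis" "HOL-Computational_Algebra.Polynomial"
    "HOL-Computational_Algebra.Squarefree"
begin

text \<open>An etale cubic algebra over Q is represented (up to isomorphism) by its image
  under the three complex embeddings: a Q-subalgebra of complex^3 (componentwise
  operations) of Q-dimension 3.  Every such subalgebra is reduced, hence etale, and
  every etale cubic algebra arises this way.\<close>

definition etale_cubic :: "(complex^3) set \<Rightarrow> bool" where
  "etale_cubic K \<longleftrightarrow> 1 \<in> K \<and> (\<forall>x\<in>K. \<forall>y\<in>K. x + y \<in> K \<and> x * y \<in> K)
     \<and> (\<forall>q::rat. \<forall>x\<in>K. real_of_rat q *\<^sub>R x \<in> K)
     \<and> (\<exists>b1 b2 b3. b1 \<in> K \<and> b2 \<in> K \<and> b3 \<in> K \<and>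
          (\<forall>x\<in>K. \<exists>!q::rat \<times> rat \<times> rat.
             x = real_of_rat (fst q) *\<^sub>R b1 + real_of_rat (fst (snd q)) *\<^sub>R b2
                 + real_of_rat (snd (snd q)) *\<^sub>R b3))"

definition max_order :: "(complex^3) set \<Rightarrow> (complex^3) set" where
  "max_order K = {x \<in> K. \<exists>p::int poly. lead_coeff p = 1 \<and> poly (map_poly of_int p) x = 0}"

definition grp_index :: "(complex^3) set \<Rightarrow> (complex^3) set \<Rightarrow> nat" where
  "grp_index A B = card {(+) x ` B | x. x \<in> A}"

definition is_order :: "(complex^3) set \<Rightarrow> (complex^3) set \<Rightarrow> bool" where
  "is_order K R \<longleftrightarrow> R \<subseteq> max_order K \<and> 1 \<in> R \<and>
     (\<forall>x\<in>R. \<forall>y\<in>R. x + y \<in> R \<and> x - y \<in> R \<and> x * y \<in> R) \<and>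
     finite {(+) x ` R | x. x \<in> max_order K}"

definition O_ideal :: "(complex^3) set \<Rightarrow> (complex^3) set \<Rightarrow> bool" where
  "O_ideal OK I \<longleftrightarrow> I \<subseteq> OK \<and> 0 \<in> I \<and> (\<forall>x\<in>I. \<forall>y\<in>I. x + y \<in> I \<and> x - y \<in> I)
     \<and> (\<forall>a\<in>OK. \<forall>x\<in>I. a * x \<in> I)"

definition is_conductor :: "(complex^3) set \<Rightarrow> (complex^3) set \<Rightarrow> (complex^3) set \<Rightarrow> bool" where
  "is_conductor OK R F \<longleftrightarrow> O_ideal OK F \<and> F \<subseteq> R \<and> (\<forall>I. O_ideal OK I \<and> I \<subseteq> R \<longrightarrow> I \<subseteq> F)"

definition O_prime_ideal :: "(complex^3) set \<Rightarrow> (complex^3) set \<Rightarrow> bool" where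
  "O_prime_ideal OK P \<longleftrightarrow> O_ideal OK P \<and> P \<noteq> OK \<and>
     (\<forall>x\<in>OK. \<forall>y\<in>OK. x * y \<in> P \<longrightarrow> x \<in> P \<or> y \<in> P)"

definition alg_is_field :: "(complex^3) set \<Rightarrow> bool" where
  "alg_is_field K \<longleftrightarrow> (\<forall>x\<in>K. x \<noteq> 0 \<longrightarrow> (\<exists>y\<in>K. x * y = 1))"

definition scaled_order :: "nat \<Rightarrow> (complex^3) set \<Rightarrow> (complex^3) set" where
  "scaled_order n OK = {of_nat n * x | x. x \<in> OK}"

definition prime_type3 :: "(complex^3) set \<Rightarrow> nat \<Rightarrow> bool" where
  "prime_type3 K p \<longleftrightarrow> alg_is_field K \<and>
     O_prime_ideal (max_order K) (scaled_order p (max_order K)) \<and>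
     grp_index (max_order K) (scaled_order p (max_order K)) = p ^ 3"

end

theory Submission
  imports Defs "Jordan_Normal_Form.Char_Poly" "HOL-Algebra.Sylow" "HOL-Algebra.Multiplicative_Group"
begin

text \<open>Since f O_k \<subseteq> F and O_k/F has order f^2, we get
  F \<inter> Z = fZ: if n \<in> F, then gcd(n, f) annihilates O_k/F, so by Cauchy's theorem every prime
  factor of f divides gcd(n, f), and f divides n because f is squarefree. Hence (Z + F)/F is
  cyclic of order f and O_k/(Z + F) has order f^2/f = f. The same argument for O_k/(Z + F)
  shows that an O_k-ideal I \<subseteq> Z + F lies in F: if n + y \<in> I with y \<in> F, then n O_k \<subseteq> Z + F,
  forcing f to divide n. Conversely, an order R of index f with conductor F contains Z + F, and
  equal indices force R = Z + F.\<close>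

section \<open>Cosets of additive subgroups\<close>

definition add_subgroup :: "'a::ab_group_add set \<Rightarrow> bool" where
  "add_subgroup S \<longleftrightarrow> 0 \<in> S \<and> (\<forall>x\<in>S. \<forall>y\<in>S. x + y \<in> S \<and> x - y \<in> S)"

definition add_cosets :: "'a::ab_group_add set \<Rightarrow> 'a set \<Rightarrow> 'a set set" where
  "add_cosets B A = {(+) x ` A | x. x \<in> B}"

lemma add_subgroup_zero: "add_subgroup S \<Longrightarrow> 0 \<in> S"
  and add_subgroup_add: "add_subgroup S \<Longrightarrow> x \<in> S \<Longrightarrow> y \<in> S \<Longrightarrow> x + y \<in> S"
  and add_subgroup_diff: "add_subgroup S \<Longrightarrow> x \<in> S \<Longrightarrow> y \<in> S \<Longrightarrow> x - y \<in> S"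
  unfolding add_subgroup_def by blast+

lemma add_subgroup_uminus: "add_subgroup S \<Longrightarrow> x \<in> S \<Longrightarrow> - x \<in> S"
  using add_subgroup_diff[of S 0 x] add_subgroup_zero[of S] by simp

lemma add_subgroup_of_int_mult:
  fixes x :: "'a::ring_1"
  assumes "add_subgroup S" "x \<in> S"
  shows "of_int n * x \<in> S"
proof -
  have nat: "of_nat m * x \<in> S" for m
    using assms by (induction m) (simp_all add: add_subgroup_zero add_subgroup_add distrib_right)
  show ?thesis
  proof (cases n rule: int_cases2)
    case (nonneg m)
    then show ?thesis
      using nat[of m] by simp
  next
    case (nonpos m)
    then have "of_int n * x = - (of_nat m * x)"
      by simp
    then show ?thesis
      using add_subgroup_uminus[OF assms(1) nat] by simp
  qed
qed

lemma add_coset_eq_iff: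
  assumes "add_subgroup S"
  shows "(+) x ` S = (+) y ` S \<longleftrightarrow> x - y \<in> S"
proof
  assume "(+) x ` S = (+) y ` S"
  then have "x \<in> (+) y ` S"
    using add_subgroup_zero[OF assms] by (metis add_0_right imageI)
  then show "x - y \<in> S"
    by auto
next
  assume xy: "x - y \<in> S"
  show "(+) x ` S = (+) y ` S"
  proof (intro equalityI image_subsetI)
    fix s assume "s \<in> S"
    show "x + s \<in> (+) y ` S"
      using add_subgroup_add[OF assms xy \<open>s \<in> S\<close>] by (rule rev_image_eqI) simp
    show "y + s \<in> (+) x ` S"
      using add_subgroup_diff[OF assms \<open>s \<in> S\<close> xy] by (rule rev_image_eqI) simp
  qed
qed

lemma add_coset_plus_subgroup:
  assumes "add_subgroup C" "A \<subseteq> C" "0 \<in> A"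
  shows "(+) x ` A + C = (+) x ` C"
proof
  show "(+) x ` A + C \<subseteq> (+) x ` C"
    using assms add_subgroup_add[OF assms(1)] by (auto simp: set_plus_def add.assoc)
  show "(+) x ` C \<subseteq> (+) x ` A + C"
    using assms(3) by (auto intro: set_plus_intro)
qed

lemma add_cosets_self: "add_subgroup B \<Longrightarrow> A \<in> add_cosets B A"
  unfolding add_cosets_def using add_subgroup_zero[of B] by force

lemma add_cosets_fiber:
  assumes "add_subgroup A" "add_subgroup C" "add_subgroup B" "A \<subseteq> C" "C \<subseteq> B" "x \<in> B"
  shows "{E \<in> add_cosets B A. E + C = (+) x ` C} = image ((+) x) ` add_cosets C A"
proof (intro equalityI subsetI)
  have plus_C: "(+) y ` A + C = (+) y ` C" for y
    using add_coset_plus_subgroup assms(1,2,4) add_subgroup_zero by blast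
  fix E
  {
    assume "E \<in> {E \<in> add_cosets B A. E + C = (+) x ` C}"
    then obtain y where "y \<in> B" "E = (+) y ` A" "(+) y ` C = (+) x ` C"
      unfolding add_cosets_def using plus_C by auto
    then have "y - x \<in> C" "E = (+) x ` ((+) (y - x) ` A)"
      using add_coset_eq_iff[OF assms(2)] by (auto simp: image_image)
    then show "E \<in> image ((+) x) ` add_cosets C A"
      unfolding add_cosets_def by blast
  next
    assume "E \<in> image ((+) x) ` add_cosets C A"
    then obtain c where c: "c \<in> C" "E = (+) (x + c) ` A"
      unfolding add_cosets_def by (auto simp: image_image add.assoc)
    then have "E \<in> add_cosets B A"
      using add_subgroup_add[OF assms(3,6)] assms(5) unfolding add_cosets_def by blast
    moreover have "E + C = (+) x ` C"
      using c plus_C add_coset_eq_iff[OF assms(2), of "x + c" x] by simp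
    ultimately show "E \<in> {E \<in> add_cosets B A. E + C = (+) x ` C}"
      by blast
  }
qed

lemma card_add_cosets_tower:
  assumes "add_subgroup A" "add_subgroup C" "add_subgroup B" "A \<subseteq> C" "C \<subseteq> B"
    and "finite (add_cosets B A)"
  shows "card (add_cosets B A) = card (add_cosets B C) * card (add_cosets C A)"
proof -
  define fiber where "fiber D = {E \<in> add_cosets B A. E + C = D}" for D
  have "(+) x ` A + C = (+) x ` C" for x
    using add_coset_plus_subgroup assms(1,2,4) add_subgroup_zero by blast
  then have "(\<lambda>E. E + C) ` add_cosets B A = add_cosets B C"
    unfolding add_cosets_def by auto
  then have partition: "add_cosets B A = (\<Union>D\<in>add_cosets B C. fiber D)"
    and finite: "finite (add_cosets B C)"
    unfolding fiber_def using finite_imageI[OF assms(6), of "\<lambda>E. E + C"] by auto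
  have card_fiber: "card (fiber D) = card (add_cosets C A)" if D: "D \<in> add_cosets B C" for D
  proof -
    obtain x where x: "x \<in> B" "D = (+) x ` C"
      using D unfolding add_cosets_def by blast
    have "inj_on (image ((+) x)) (add_cosets C A)"
      by (rule inj_onI) (simp add: inj_image_eq_iff)
    moreover have "fiber D = image ((+) x) ` add_cosets C A"
      unfolding fiber_def x(2) by (rule add_cosets_fiber[OF assms(1-5) x(1)])
    ultimately show ?thesis
      by (simp add: card_image)
  qed
  have "card (add_cosets B A) = (\<Sum>D\<in>add_cosets B C. card (fiber D))"
    unfolding partition using finite partition assms(6)
    by (intro card_UN_disjoint) (auto simp: fiber_def)
  also have "\<dots> = card (add_cosets B C) * card (add_cosets C A)"
    using card_fiber by simp
  finally show ?thesis .
qed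

lemma add_subgroup_eq_if_card_add_cosets_eq:
  assumes "add_subgroup A" "add_subgroup C" "add_subgroup B" "A \<subseteq> C" "C \<subseteq> B"
    and "finite (add_cosets B A)" "card (add_cosets B A) = card (add_cosets B C)"
  shows "C = A"
proof -
  have "add_cosets B A \<noteq> {}"
    using add_cosets_self[OF assms(3)] by blast
  then have "card (add_cosets B A) \<noteq> 0"
    using assms(6) by simp
  moreover have "card (add_cosets B A) = card (add_cosets B A) * card (add_cosets C A)"
    using card_add_cosets_tower[OF assms(1-6)] unfolding assms(7) .
  ultimately have "card (add_cosets C A) = 1"
    by simp
  then obtain X where X: "add_cosets C A = {X}"
    by (rule card_1_singletonE)
  have "c \<in> A" if "c \<in> C" for c
  proof -
    have "(+) c ` A \<in> add_cosets C A"
      using that unfolding add_cosets_def by blast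
    then have "(+) c ` A = (+) 0 ` A"
      using add_cosets_self[OF assms(2), of A] X by simp
    then show ?thesis
      using add_coset_eq_iff[OF assms(1), of c 0] by simp
  qed
  then show ?thesis
    using assms(4) by blast
qed

section \<open>Annihilators of finite quotients\<close>

definition add_group :: "'a::ab_group_add set \<Rightarrow> 'a monoid" where
  "add_group S = \<lparr>carrier = S, mult = (+), one = 0\<rparr>"

lemma comm_group_add_group:
  assumes "add_subgroup S"
  shows "comm_group (add_group S)"
proof (rule comm_groupI)
  fix x assume "x \<in> carrier (add_group S)"
  then show "\<exists>y\<in>carrier (add_group S). y \<otimes>\<^bsub>add_group S\<^esub> x = \<one>\<^bsub>add_group S\<^esub>"
    using add_subgroup_uminus[OF assms] by (auto simp: add_group_def intro!: bexI[of _ "- x"])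
qed (use assms in \<open>auto simp: add_group_def add_subgroup_zero add_subgroup_add ac_simps\<close>)

lemma r_coset_add_group: "A #>\<^bsub>add_group B\<^esub> x = (+) x ` A"
  unfolding r_coset_def add_group_def by (auto simp: add.commute)

lemma normal_add_group:
  assumes A: "add_subgroup A" and B: "add_subgroup B" and "A \<subseteq> B"
  shows "A \<lhd> add_group B"
proof -
  interpret G: comm_group "add_group B"
    using comm_group_add_group[OF B] .
  have "inv\<^bsub>add_group B\<^esub> a = - a" if "a \<in> B" for a
    using that add_subgroup_uminus[OF B] by (intro G.inv_equality) (auto simp: add_group_def)
  then have "subgroup A (add_group B)"
    using \<open>A \<subseteq> B\<close> add_subgroup_zero[OF A] add_subgroup_add[OF A] add_subgroup_uminus[OF A]
    by (intro G.subgroupI) (auto simp: add_group_def)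
  then show ?thesis
    using G.subgroup_imp_normal by blast
qed

lemma carrier_add_group_Mod: "carrier (add_group B Mod A) = add_cosets B A"
  unfolding FactGroup_def RCOSETS_def add_cosets_def r_coset_add_group by (auto simp: add_group_def)

lemma one_add_group_Mod: "\<one>\<^bsub>add_group B Mod A\<^esub> = A"
  by (simp add: FactGroup_def)

lemma pow_add_group_Mod:
  fixes A B :: "'a::ring_1 set"
  assumes "A \<lhd> add_group B" "add_subgroup B" "x \<in> B"
  shows "((+) x ` A) [^]\<^bsub>add_group B Mod A\<^esub> n = (+) (of_nat n * x) ` A"
proof (induction n)
  case 0
  show ?case
    by (simp add: FactGroup_def)
next
  case (Suc n)
  have "((+) x ` A) [^]\<^bsub>add_group B Mod A\<^esub> Suc n
      = (A #>\<^bsub>add_group B\<^esub> (of_nat n * x)) <#>\<^bsub>add_group B\<^esub> (A #>\<^bsub>add_group B\<^esub> x)"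
    using Suc by (simp add: FactGroup_def r_coset_add_group)
  also have "\<dots> = A #>\<^bsub>add_group B\<^esub> (of_nat n * x + x)"
    using normal.rcos_sum[OF assms(1), of "of_nat n * x" x] assms(3)
      add_subgroup_of_int_mult[OF assms(2,3), of "int n"]
    by (simp add: add_group_def)
  also have "\<dots> = (+) (of_nat (Suc n) * x) ` A"
    by (simp add: r_coset_add_group distrib_right add.commute)
  finally show ?case .
qed

text \<open>Cauchy's theorem gives an element of order p in B/A, and g kills it.\<close>

lemma prime_dvd_if_kills_add_cosets:
  fixes A B :: "'a::ring_1 set"
  assumes A: "add_subgroup A" and B: "add_subgroup B" and "A \<subseteq> B"
    and finite: "finite (add_cosets B A)" and kills: "\<And>x. x \<in> B \<Longrightarrow> of_nat g * x \<in> A"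
    and p: "prime p" "p dvd card (add_cosets B A)"
  shows "p dvd g"
proof -
  have normal: "A \<lhd> add_group B"
    using A B \<open>A \<subseteq> B\<close> by (rule normal_add_group)
  define Q where "Q = add_group B Mod A"
  interpret Q: group Q
    unfolding Q_def using normal by (rule normal.factorgroup_is_group)
  obtain m where "card (add_cosets B A) = p ^ 1 * m"
    using p(2) by auto
  then have "order Q = p ^ 1 * m" "finite (carrier Q)"
    using finite unfolding Q_def carrier_add_group_Mod order_def by simp_all
  then obtain H where H: "subgroup H Q" "card H = p"
    using sylow_thm[OF p(1) Q.is_group, of 1 m] by auto
  have "H \<noteq> {\<one>\<^bsub>Q\<^esub>}"
    using H(2) p(1) by (auto simp del: card_1_singleton_iff)
  then obtain X where X: "X \<in> H" "X \<noteq> \<one>\<^bsub>Q\<^esub>"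
    using subgroup.one_closed[OF H(1)] by blast
  then have XQ: "X \<in> carrier Q"
    using subgroup.subset[OF H(1)] by blast
  then obtain x where x: "x \<in> B" "X = (+) x ` A"
    unfolding Q_def carrier_add_group_Mod add_cosets_def by blast
  have "X [^]\<^bsub>Q\<^esub> g = \<one>\<^bsub>Q\<^esub>"
    using pow_add_group_Mod[OF normal B x(1), of g] kills[OF x(1)] add_coset_eq_iff[OF A, of _ 0]
    unfolding Q_def one_add_group_Mod x(2) by simp
  then have "Q.ord X dvd g"
    using Q.pow_eq_id[OF XQ] by blast
  moreover have "X [^]\<^bsub>Q\<^esub> p = \<one>\<^bsub>Q\<^esub>"
    using group.pow_order_eq_1[OF Q.subgroup_imp_group[OF H(1)], of X] X(1) H(2)
    by (simp add: order_def Q.nat_pow_consistent[symmetric])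
  then have "Q.ord X dvd p"
    using Q.pow_eq_id[OF XQ] by blast
  moreover have "Q.ord X \<noteq> 1"
    using Q.ord_eq_1[OF XQ] X(2) by blast
  ultimately have "Q.ord X = p"
    using p(1) unfolding prime_nat_iff by blast
  with \<open>Q.ord X dvd g\<close> show ?thesis
    by simp
qed

lemma squarefree_dvd_if_prime_divisors_dvd:
  fixes f n :: nat
  assumes "squarefree f" "\<And>p. prime p \<Longrightarrow> p dvd f \<Longrightarrow> p dvd n"
  shows "f dvd n"
proof (cases "n = 0")
  case False
  have "f \<noteq> 0"
    using assms(1) by (metis not_squarefree_0)
  have "multiplicity p f \<le> multiplicity p n" if "prime p" for p
  proof (cases "p dvd f")
    case True
    then have "multiplicity p n \<ge> 1"
      using assms(2) that False by (intro multiplicity_geI) auto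
    moreover have "multiplicity p f \<le> 1"
      using assms(1) \<open>f \<noteq> 0\<close> that by (simp add: squarefree_factorial_semiring'')
    ultimately show ?thesis
      by linarith
  qed (simp add: not_dvd_imp_multiplicity_0)
  then show ?thesis
    using prime_multiplicity_le_imp_dvd[OF \<open>f \<noteq> 0\<close> False] by blast
qed simp

lemma squarefree_dvd_if_kills_add_cosets:
  fixes A B :: "'a::ring_1 set" and n :: int and f :: nat
  assumes A: "add_subgroup A" and B: "add_subgroup B" and "A \<subseteq> B" "finite (add_cosets B A)"
    and n: "\<And>x. x \<in> B \<Longrightarrow> of_int n * x \<in> A" and f: "\<And>x. x \<in> B \<Longrightarrow> of_nat f * x \<in> A"
    and "squarefree f" "\<And>p. prime p \<Longrightarrow> p dvd f \<Longrightarrow> p dvd card (add_cosets B A)"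
  shows "int f dvd n"
proof -
  define d where "d = gcd n (int f)"
  obtain u v where uv: "u * n + v * int f = d"
    unfolding d_def using bezout_int by blast
  have "of_nat (nat d) * x \<in> A" if "x \<in> B" for x
  proof -
    have "of_nat (nat d) * x = of_int (u * n + v * int f) * x"
      unfolding uv d_def by simp
    also have "\<dots> = of_int u * (of_int n * x) + of_int v * (of_nat f * x)"
      by (simp add: distrib_right mult.assoc)
    finally have "of_nat (nat d) * x = of_int u * (of_int n * x) + of_int v * (of_nat f * x)" .
    then show ?thesis
      using that n f add_subgroup_add[OF A] add_subgroup_of_int_mult[OF A] by simp
  qed
  then have "p dvd nat d" if "prime p" "p dvd f" for p
    using prime_dvd_if_kills_add_cosets assms that by blast
  then have "f dvd nat d"
    using squarefree_dvd_if_prime_divisors_dvd \<open>squarefree f\<close> by blast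
  then have "int f dvd d"
    unfolding d_def by (simp flip: int_dvd_int_iff)
  also have "d dvd n"
    unfolding d_def by simp
  finally show ?thesis .
qed

section \<open>The ring Z + F\<close>

lemma mem_Ints_plus_iff: "x \<in> \<int> + F \<longleftrightarrow> (\<exists>n y. y \<in> F \<and> x = of_int n + y)"
  by (auto simp: set_plus_def Ints_def)

locale square_index_ideal =
  fixes OK F :: "'a::comm_ring_1 set" and f :: nat
  assumes add_subgroup_OK: "add_subgroup OK"
    and Ints_subset_OK: "\<int> \<subseteq> OK"
    and add_subgroup_F: "add_subgroup F"
    and F_subset_OK: "F \<subseteq> OK"
    and mult_mem_F: "a \<in> OK \<Longrightarrow> x \<in> F \<Longrightarrow> a * x \<in> F"
    and of_nat_mult_mem_F: "x \<in> OK \<Longrightarrow> of_nat f * x \<in> F"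
    and card_add_cosets_F: "card (add_cosets OK F) = f ^ 2"
    and squarefree_f: "squarefree f"
begin

lemma f_pos: "f > 0"
  using squarefree_f not_squarefree_0 by (cases f) auto

lemma finite_add_cosets_F: "finite (add_cosets OK F)"
  using card_add_cosets_F f_pos by (intro card_ge_0_finite) simp

lemma of_int_mem_F_iff: "of_int n \<in> F \<longleftrightarrow> int f dvd n"
proof
  assume "of_int n \<in> F"
  then have "of_int n * x \<in> F" if "x \<in> OK" for x
    using mult_mem_F[OF that \<open>of_int n \<in> F\<close>] by (metis mult.commute)
  moreover have "prime p \<Longrightarrow> p dvd f \<Longrightarrow> p dvd card (add_cosets OK F)" for p
    unfolding card_add_cosets_F by (simp add: power2_eq_square)
  ultimately show "int f dvd n"
    using squarefree_dvd_if_kills_add_cosets[OF add_subgroup_F add_subgroup_OK F_subset_OK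
        finite_add_cosets_F _ of_nat_mult_mem_F squarefree_f]
    by blast
next
  assume "int f dvd n"
  then obtain k where "n = int f * k" ..
  then have "of_int n = of_int k * (of_nat f * (1 :: 'a))"
    by (simp add: mult.commute)
  moreover have "of_nat f * (1 :: 'a) \<in> F"
    using of_nat_mult_mem_F Ints_subset_OK Ints_1 by blast
  moreover have "of_int k \<in> OK"
    using Ints_subset_OK by auto
  ultimately show "of_int n \<in> F"
    using mult_mem_F by simp
qed

lemma F_subset_Ints_plus_F: "F \<subseteq> \<int> + F"
proof
  fix x :: 'a assume "x \<in> F"
  then have "0 + x \<in> \<int> + F"
    by (rule set_plus_intro[OF Ints_0])
  then show "x \<in> \<int> + F"
    by simp
qed

lemma Ints_subset_Ints_plus_F: "\<int> \<subseteq> \<int> + F"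
proof
  fix x :: 'a assume "x \<in> \<int>"
  then have "x + 0 \<in> \<int> + F"
    using add_subgroup_zero[OF add_subgroup_F] by (rule set_plus_intro)
  then show "x \<in> \<int> + F"
    by simp
qed

lemma Ints_plus_F_subset_OK: "\<int> + F \<subseteq> OK"
  using Ints_subset_OK F_subset_OK add_subgroup_add[OF add_subgroup_OK]
  by (auto simp: mem_Ints_plus_iff subset_iff)

lemma add_subgroup_Ints_plus_F: "add_subgroup (\<int> + F)"
  unfolding add_subgroup_def
proof (intro conjI ballI)
  show "0 \<in> \<int> + F"
    using F_subset_Ints_plus_F add_subgroup_zero[OF add_subgroup_F] by blast
  fix u v assume "u \<in> \<int> + F" "v \<in> \<int> + F"
  then obtain a b x y where uv: "u = of_int a + x" "v = of_int b + y" "x \<in> F" "y \<in> F"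
    unfolding mem_Ints_plus_iff by blast
  have "u + v = of_int (a + b) + (x + y)" "u - v = of_int (a - b) + (x - y)"
    unfolding uv by simp_all
  moreover have "x + y \<in> F" "x - y \<in> F"
    using uv(3,4) add_subgroup_add add_subgroup_diff add_subgroup_F by blast+
  ultimately show "u + v \<in> \<int> + F" "u - v \<in> \<int> + F"
    unfolding mem_Ints_plus_iff by blast+
qed

lemma Ints_plus_F_mult_closed:
  assumes "x \<in> \<int> + F" "y \<in> \<int> + F"
  shows "x * y \<in> \<int> + F"
proof -
  obtain a b x' y' where xy: "x = of_int a + x'" "y = of_int b + y'" "x' \<in> F" "y' \<in> F"
    using assms unfolding mem_Ints_plus_iff by blast
  have "of_int a * y' \<in> F" "of_int b * x' \<in> F" "x' * y' \<in> F"
    using xy(3,4) F_subset_OK Ints_subset_OK by (auto intro!: mult_mem_F)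
  then have "of_int a * y' + of_int b * x' + x' * y' \<in> F"
    using add_subgroup_add[OF add_subgroup_F] by blast
  moreover have "x * y = of_int (a * b) + (of_int a * y' + of_int b * x' + x' * y')"
    using xy by (simp add: algebra_simps)
  ultimately show ?thesis
    unfolding mem_Ints_plus_iff by blast
qed

lemma add_cosets_Ints_plus_F_F:
  "(\<lambda>k. (+) (of_int k) ` F) ` {0..<int f} = add_cosets (\<int> + F) F" (is "?coset ` _ = _")
proof (intro equalityI subsetI)
  fix C assume "C \<in> ?coset ` {0..<int f}"
  then show "C \<in> add_cosets (\<int> + F) F"
    unfolding add_cosets_def using F_subset_Ints_plus_F add_subgroup_zero[OF add_subgroup_F]
    by (force simp: mem_Ints_plus_iff)
next
  fix C assume "C \<in> add_cosets (\<int> + F) F"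
  then obtain n y where C: "C = (+) (of_int n + y) ` F" "y \<in> F"
    unfolding add_cosets_def mem_Ints_plus_iff by blast
  have "of_int (n - n mod int f) \<in> F"
    unfolding of_int_mem_F_iff by (simp add: minus_mod_eq_mult_div)
  then have "of_int (n - n mod int f) + y \<in> F"
    using add_subgroup_add[OF add_subgroup_F _ C(2)] by blast
  moreover have "(of_int n + y) - of_int (n mod int f) = of_int (n - n mod int f) + y"
    by simp
  ultimately have "(of_int n + y) - of_int (n mod int f) \<in> F"
    by metis
  then have "C = ?coset (n mod int f)"
    unfolding C(1) using add_coset_eq_iff[OF add_subgroup_F] by blast
  then show "C \<in> ?coset ` {0..<int f}"
    using f_pos by auto
qed

lemma card_add_cosets_Ints_plus_F_F: "card (add_cosets (\<int> + F) F) = f"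
proof -
  let ?coset = "\<lambda>k. (+) (of_int k) ` F"
  have "inj_on ?coset {0..<int f}"
  proof (rule inj_onI)
    fix k l assume kl: "k \<in> {0..<int f}" "l \<in> {0..<int f}" "?coset k = ?coset l"
    then have "of_int (k - l) \<in> F"
      using add_coset_eq_iff[OF add_subgroup_F] by simp
    then have "int f dvd k - l"
      using of_int_mem_F_iff by blast
    moreover have "\<bar>k - l\<bar> < int f"
      using kl(1,2) by auto
    ultimately show "k = l"
      using dvd_imp_le_int[of "k - l" "int f"] by fastforce
  qed
  from card_image[OF this] show ?thesis
    unfolding add_cosets_Ints_plus_F_F by simp
qed

lemma card_add_cosets_Ints_plus_F: "card (add_cosets OK (\<int> + F)) = f"
proof -
  have "f * f = card (add_cosets OK (\<int> + F)) * f"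
    using card_add_cosets_tower[OF add_subgroup_F add_subgroup_Ints_plus_F add_subgroup_OK
        F_subset_Ints_plus_F Ints_plus_F_subset_OK finite_add_cosets_F]
    unfolding card_add_cosets_F card_add_cosets_Ints_plus_F_F by (simp add: power2_eq_square)
  then show ?thesis
    using f_pos by simp
qed

lemma finite_add_cosets_Ints_plus_F: "finite (add_cosets OK (\<int> + F))"
  using card_add_cosets_Ints_plus_F f_pos by (intro card_ge_0_finite) simp

lemma ideal_subset_F:
  assumes "I \<subseteq> \<int> + F" and ideal: "\<And>a x. a \<in> OK \<Longrightarrow> x \<in> I \<Longrightarrow> a * x \<in> I"
  shows "I \<subseteq> F"
proof
  fix x assume "x \<in> I"
  then have "x \<in> \<int> + F"
    using assms(1) by blast
  then obtain n y where x: "x = of_int n + y" "y \<in> F"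
    unfolding mem_Ints_plus_iff by blast
  have "of_int n * z \<in> \<int> + F" if "z \<in> OK" for z
  proof -
    have "z * x \<in> \<int> + F" "z * y \<in> \<int> + F"
      using ideal[OF that \<open>x \<in> I\<close>] assms(1) mult_mem_F[OF that x(2)] F_subset_Ints_plus_F by auto
    moreover have "of_int n * z = z * x - z * y"
      unfolding x(1) by (simp add: algebra_simps)
    ultimately show ?thesis
      using add_subgroup_diff[OF add_subgroup_Ints_plus_F] by simp
  qed
  moreover have "of_nat f * z \<in> \<int> + F" if "z \<in> OK" for z
    using of_nat_mult_mem_F[OF that] F_subset_Ints_plus_F by blast
  ultimately have "int f dvd n"
    using squarefree_dvd_if_kills_add_cosets[OF add_subgroup_Ints_plus_F add_subgroup_OK
        Ints_plus_F_subset_OK finite_add_cosets_Ints_plus_F _ _ squarefree_f]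
    unfolding card_add_cosets_Ints_plus_F by blast
  then show "x \<in> F"
    using x add_subgroup_add[OF add_subgroup_F] of_int_mem_F_iff by blast
qed

lemma Ints_plus_F_unique:
  assumes "add_subgroup R" "R \<subseteq> OK" "1 \<in> R" "F \<subseteq> R" "card (add_cosets OK R) = f"
  shows "R = \<int> + F"
proof (rule add_subgroup_eq_if_card_add_cosets_eq
    [OF add_subgroup_Ints_plus_F assms(1) add_subgroup_OK _ assms(2) finite_add_cosets_Ints_plus_F])
  show "\<int> + F \<subseteq> R"
  proof
    fix u assume "u \<in> \<int> + F"
    then obtain n y where "u = of_int n + y" "y \<in> F"
      unfolding mem_Ints_plus_iff by blast
    then show "u \<in> R"
      using add_subgroup_of_int_mult[OF assms(1,3), of n] assms(4) add_subgroup_add[OF assms(1)]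
      by auto
  qed
  show "card (add_cosets OK (\<int> + F)) = card (add_cosets OK R)"
    using assms(5) card_add_cosets_Ints_plus_F by simp
qed

end

section \<open>Algebraic integers\<close>

definition int_span :: "(nat \<Rightarrow> 'a::ring_1) \<Rightarrow> nat \<Rightarrow> 'a set" where
  "int_span g N = range (\<lambda>c. \<Sum>l<N. of_int (c l) * g l)"

lemma int_span_intro: "u = (\<Sum>l<N. of_int (c l) * g l) \<Longrightarrow> u \<in> int_span g N"
  unfolding int_span_def by (rule range_eqI)

lemma int_span_zero: "0 \<in> int_span g N"
  by (rule int_span_intro[where c = "\<lambda>_. 0"]) simp

lemma int_span_add:
  assumes "u \<in> int_span g N" "v \<in> int_span g N"
  shows "u + v \<in> int_span g N"
proof -
  obtain c d where "u = (\<Sum>l<N. of_int (c l) * g l)" "v = (\<Sum>l<N. of_int (d l) * g l)"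
    using assms unfolding int_span_def by auto
  then have "u + v = (\<Sum>l<N. of_int (c l + d l) * g l)"
    by (simp add: sum.distrib distrib_right)
  then show ?thesis
    by (rule int_span_intro)
qed

lemma int_span_of_int_mult:
  assumes "u \<in> int_span g N"
  shows "of_int a * u \<in> int_span g N"
proof -
  obtain c where "u = (\<Sum>l<N. of_int (c l) * g l)"
    using assms unfolding int_span_def by auto
  then have "of_int a * u = (\<Sum>l<N. of_int (a * c l) * g l)"
    by (simp add: sum_distrib_left mult.assoc)
  then show ?thesis
    by (rule int_span_intro)
qed

lemma int_span_sum:
  "finite S \<Longrightarrow> (\<And>i. i \<in> S \<Longrightarrow> h i \<in> int_span g N) \<Longrightarrow> (\<Sum>i\<in>S. h i) \<in> int_span g N"
  by (induction S rule: finite_induct) (auto intro: int_span_add int_span_zero)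

lemma int_span_generator:
  assumes "k < N"
  shows "g k \<in> int_span g N"
proof -
  have "g k = (\<Sum>l<N. of_int (if l = k then 1 else 0) * g l)"
    using assms by (simp add: if_distrib[of "\<lambda>c. of_int c * _"] sum.delta cong: if_cong)
  then show ?thesis
    by (rule int_span_intro)
qed

text \<open>The determinant trick: z is an eigenvalue of the integer matrix of multiplication by z.\<close>

lemma algebraic_int_of_mult_int_span:
  fixes z :: "'a::field_char_0"
  assumes "k0 < N" "g k0 \<noteq> 0" and mult: "\<And>k. k < N \<Longrightarrow> z * g k \<in> int_span g N"
  shows "algebraic_int z"
proof -
  have "\<forall>k<N. \<exists>c. z * g k = (\<Sum>l<N. of_int (c l) * g l)"
    using mult unfolding int_span_def by blast
  then obtain C where C: "\<And>k. k < N \<Longrightarrow> z * g k = (\<Sum>l<N. of_int (C k l) * g l)"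
    by metis
  define A :: "int mat" where "A = Matrix.mat N N (\<lambda>(k, l). C k l)"
  define v where "v = Matrix.vec N g"
  have A: "A \<in> carrier_mat N N"
    unfolding A_def by simp
  have v: "v \<in> carrier_vec N"
    unfolding v_def by simp
  have "map_mat of_int A *\<^sub>v v = z \<cdot>\<^sub>v v"
  proof (rule eq_vecI)
    fix k assume "k < dim_vec (z \<cdot>\<^sub>v v)"
    then have "k < N"
      unfolding v_def by simp
    then show "(map_mat of_int A *\<^sub>v v) $ k = (z \<cdot>\<^sub>v v) $ k"
      using C unfolding A_def v_def by (simp add: mult_mat_vec_def scalar_prod_def lessThan_atLeast0)
  qed (simp add: A_def v_def)
  moreover have "v \<noteq> 0\<^sub>v N"
    using assms(1,2) unfolding v_def by (metis index_vec index_zero_vec(1))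
  ultimately have "eigenvalue (map_mat of_int A) z"
    using A v unfolding eigenvalue_def eigenvector_def by auto
  then have "poly (char_poly (map_mat of_int A)) z = 0"
    using A by (simp add: eigenvalue_root_char_poly)
  moreover have "char_poly (map_mat of_int A) = (of_int_poly (char_poly A) :: 'a poly)"
    by (rule of_int_hom.char_poly_hom[OF A])
  ultimately have "poly (of_int_poly (char_poly A)) z = 0"
    by argo
  moreover have "lead_coeff (char_poly A) = 1"
    using degree_monic_char_poly[OF A] by simp
  ultimately show ?thesis
    using algebraic_int_altdef_ipoly by blast
qed

lemma algebraic_int_powers_in_int_span:
  fixes x :: "'a::field_char_0"
  assumes "algebraic_int x"
  obtains m where "m > 0" "\<And>a. x ^ a \<in> int_span (\<lambda>i. x ^ i) m"
proof -
  obtain p where p: "poly (of_int_poly p) x = 0" "lead_coeff p = 1"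
    using assms algebraic_int_altdef_ipoly by blast
  define m where "m = degree p"
  have "m > 0"
  proof (rule ccontr)
    assume "\<not> m > 0"
    then have "p = 1"
      using p(2) unfolding m_def by (metis degree_0_id gr0I one_pCons)
    then show False
      using p(1) by simp
  qed
  have "0 = (\<Sum>i\<le>m. of_int (Polynomial.coeff p i) * x ^ i)"
    using p(1) unfolding m_def by (simp add: poly_altdef coeff_map_poly)
  also have "\<dots> = (\<Sum>i<m. of_int (Polynomial.coeff p i) * x ^ i) + x ^ m"
    using p(2) unfolding m_def by (simp add: lessThan_Suc_atMost[symmetric])
  finally have top: "x ^ m = (\<Sum>i<m. of_int (- Polynomial.coeff p i) * x ^ i)"
    by (simp add: sum_negf eq_neg_iff_add_eq_0 add.commute)
  have "x ^ a \<in> int_span (\<lambda>i. x ^ i) m" for a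
  proof (induction a rule: less_induct)
    case (less a)
    show ?case
    proof (cases "a < m")
      case True
      then show ?thesis
        by (rule int_span_generator)
    next
      case False
      have "x ^ a = x ^ (a - m) * x ^ m"
        using False by (simp flip: power_add)
      also have "\<dots> = (\<Sum>i<m. of_int (- Polynomial.coeff p i) * x ^ (a - m + i))"
        unfolding top by (simp add: sum_distrib_left power_add algebra_simps)
      also have "\<dots> \<in> int_span (\<lambda>i. x ^ i) m"
        using False \<open>m > 0\<close> by (intro int_span_sum int_span_of_int_mult less) auto
      finally show ?thesis .
    qed
  qed
  with \<open>m > 0\<close> that show ?thesis
    by blast
qed

lemma algebraic_int_add:
  fixes x y :: "'a::field_char_0"
  assumes "algebraic_int x" "algebraic_int y"
  shows "algebraic_int (x + y)"
proof -
  obtain m where m: "m > 0" "\<And>a. x ^ a \<in> int_span (\<lambda>i. x ^ i) m"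
    using algebraic_int_powers_in_int_span[OF assms(1)] by blast
  obtain n where n: "n > 0" "\<And>b. y ^ b \<in> int_span (\<lambda>j. y ^ j) n"
    using algebraic_int_powers_in_int_span[OF assms(2)] by blast
  define G where "G k = x ^ (k div n) * y ^ (k mod n)" for k
  have G: "x ^ i * y ^ j \<in> int_span G (m * n)" if "i < m" "j < n" for i j
  proof -
    have "i * n + j < Suc i * n"
      using that by simp
    also have "\<dots> \<le> m * n"
      using that by (intro mult_le_mono1) simp
    finally have "G (i * n + j) \<in> int_span G (m * n)"
      by (rule int_span_generator)
    then show ?thesis
      unfolding G_def using that by simp
  qed
  have monomials: "x ^ a * y ^ b \<in> int_span G (m * n)" for a b
  proof -
    obtain c where c: "x ^ a = (\<Sum>i<m. of_int (c i) * x ^ i)"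
      using m(2)[of a] unfolding int_span_def by auto
    obtain d where d: "y ^ b = (\<Sum>j<n. of_int (d j) * y ^ j)"
      using n(2)[of b] unfolding int_span_def by auto
    have "x ^ a * y ^ b = (\<Sum>i<m. \<Sum>j<n. of_int (c i * d j) * (x ^ i * y ^ j))"
      unfolding c d by (simp add: sum_product algebra_simps)
    also have "\<dots> \<in> int_span G (m * n)"
      by (intro int_span_sum int_span_of_int_mult G) auto
    finally show ?thesis .
  qed
  show ?thesis
  proof (rule algebraic_int_of_mult_int_span)
    show "0 < m * n" "G 0 \<noteq> 0"
      using m n unfolding G_def by simp_all
    fix k
    have "(x + y) * G k = x ^ Suc (k div n) * y ^ (k mod n) + x ^ (k div n) * y ^ Suc (k mod n)"
      unfolding G_def by (simp add: algebra_simps)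
    then show "(x + y) * G k \<in> int_span G (m * n)"
      by (simp only: int_span_add monomials)
  qed
qed

section \<open>Orders in an etale cubic algebra\<close>

lemma of_int_vec_nth: "(of_int n :: 'a::ring_1^'n) $ i = of_int n"
  by (cases n rule: int_cases) (simp_all add: of_nat_index)

lemma poly_of_int_poly_vec_nth:
  "poly (of_int_poly p) (x :: 'a::comm_ring_1^'n) $ i = poly (of_int_poly p) (x $ i)"
  by (induction p rule: pCons_induct) (simp_all add: of_int_vec_nth)

lemma max_order_iff: "x \<in> max_order K \<longleftrightarrow> x \<in> K \<and> (\<forall>i. algebraic_int (x $ i))"
proof
  assume "x \<in> max_order K"
  then obtain p where p: "x \<in> K" "lead_coeff p = 1" "poly (of_int_poly p) x = 0"
    unfolding max_order_def by auto
  have "poly (of_int_poly p) (x $ i) = 0" for i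
    using poly_of_int_poly_vec_nth[of p x i] p(3) by simp
  then show "x \<in> K \<and> (\<forall>i. algebraic_int (x $ i))"
    using p(1,2) algebraic_int_altdef_ipoly by blast
next
  assume x: "x \<in> K \<and> (\<forall>i. algebraic_int (x $ i))"
  then have "\<forall>i. \<exists>p. poly (of_int_poly p) (x $ i) = 0 \<and> lead_coeff p = 1"
    using algebraic_int_altdef_ipoly by blast
  then obtain P where P: "\<And>i. poly (of_int_poly (P i)) (x $ i) = 0" "\<And>i. lead_coeff (P i) = 1"
    by metis
  define p where "p = (\<Prod>i\<in>UNIV. P i)"
  have "lead_coeff p = 1"
    unfolding p_def lead_coeff_prod using P(2) by simp
  moreover have "poly (of_int_poly p) x $ i = 0 $ i" for i
  proof -
    have "poly (of_int_poly p) x $ i = poly (of_int_poly p) (x $ i)"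
      by (rule poly_of_int_poly_vec_nth)
    also have "\<dots> = (\<Prod>j\<in>UNIV. poly (of_int_poly (P j)) (x $ i))"
      unfolding p_def of_int_poly_hom.hom_prod poly_prod ..
    also have "\<dots> = 0"
      using P(1)[of i] by (intro prod_zero) auto
    finally show ?thesis
      by simp
  qed
  then have "poly (of_int_poly p) x = 0"
    by (simp add: Finite_Cartesian_Product.vec_eq_iff)
  ultimately show "x \<in> max_order K"
    using x unfolding max_order_def by blast
qed

lemma max_order_add:
  assumes "etale_cubic K" "x \<in> max_order K" "y \<in> max_order K"
  shows "x + y \<in> max_order K"
proof -
  have "x + y \<in> K"
    using assms unfolding etale_cubic_def max_order_iff by blast
  then show ?thesis
    using assms(2,3) unfolding max_order_iff by (simp add: algebraic_int_add)
qed

lemma max_order_uminus: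
  assumes "etale_cubic K" "x \<in> max_order K"
  shows "- x \<in> max_order K"
proof -
  have "real_of_rat (- 1) *\<^sub>R x \<in> K"
    using assms unfolding etale_cubic_def max_order_iff by blast
  then show ?thesis
    using assms(2) unfolding max_order_iff by simp
qed

lemma Ints_subset_max_order:
  assumes "etale_cubic K"
  shows "\<int> \<subseteq> max_order K"
proof
  fix x :: "complex^3" assume "x \<in> \<int>"
  then obtain n where n: "x = of_int n"
    by (auto elim: Ints_cases)
  have "real_of_rat (of_int n) *\<^sub>R 1 \<in> K"
    using assms unfolding etale_cubic_def by blast
  moreover have "real_of_rat (of_int n) *\<^sub>R (1 :: complex^3) = of_int n"
    by (simp add: Finite_Cartesian_Product.vec_eq_iff of_int_vec_nth scaleR_conv_of_real)
  ultimately show "x \<in> max_order K"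
    unfolding n max_order_iff by (simp add: of_int_vec_nth)
qed

lemma add_subgroup_max_order:
  assumes "etale_cubic K"
  shows "add_subgroup (max_order K)"
proof -
  have "0 \<in> max_order K"
    using Ints_subset_max_order[OF assms] by auto
  moreover have "x - y \<in> max_order K" if "x \<in> max_order K" "y \<in> max_order K" for x y
    using max_order_add[OF assms that(1) max_order_uminus[OF assms that(2)]] by simp
  ultimately show ?thesis
    unfolding add_subgroup_def using max_order_add[OF assms] by blast
qed

lemma add_subgroup_if_is_order: "is_order K R \<Longrightarrow> add_subgroup R"
  unfolding is_order_def add_subgroup_def by (metis diff_self)

lemma grp_index_eq_card_add_cosets: "grp_index B A = card (add_cosets B A)"
  unfolding grp_index_def add_cosets_def ..

lemma O_ideal_iff: "O_ideal OK I \<longleftrightarrow> I \<subseteq> OK \<and> add_subgroup I \<and> (\<forall>a\<in>OK. \<forall>x\<in>I. a * x \<in> I)"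
  unfolding O_ideal_def add_subgroup_def by blast

lemma square_index_ideal_max_order:
  assumes "etale_cubic K" "squarefree f" "O_ideal (max_order K) F"
    and "scaled_order f (max_order K) \<subseteq> F" "grp_index (max_order K) F = f ^ 2"
  shows "square_index_ideal (max_order K) F f"
proof
  show "add_subgroup (max_order K)" "\<int> \<subseteq> max_order K"
    using assms(1) by (rule add_subgroup_max_order, rule Ints_subset_max_order)
  show "add_subgroup F" "F \<subseteq> max_order K"
    using assms(3) unfolding O_ideal_iff by blast+
  show "a * x \<in> F" if "a \<in> max_order K" "x \<in> F" for a x
    using assms(3) that unfolding O_ideal_iff by blast
  show "of_nat f * x \<in> F" if "x \<in> max_order K" for x
    using assms(4) that unfolding scaled_order_def by blast
  show "card (add_cosets (max_order K) F) = f ^ 2"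
    using assms(5) unfolding grp_index_eq_card_add_cosets .
qed (rule assms(2))

context
  fixes K F :: "(complex^3) set" and f :: nat
  assumes ideal: "square_index_ideal (max_order K) F f"
begin

interpretation square_index_ideal "max_order K" F f
  by (rule ideal)

lemma is_order_Ints_plus: "is_order K (\<int> + F)"
  unfolding is_order_def
proof (intro conjI ballI)
  show "\<int> + F \<subseteq> max_order K"
    by (rule Ints_plus_F_subset_OK)
  show "1 \<in> \<int> + F"
    using Ints_subset_Ints_plus_F Ints_1 by (rule subsetD)
  show "finite {(+) x ` (\<int> + F) | x. x \<in> max_order K}"
    using finite_add_cosets_Ints_plus_F unfolding add_cosets_def .
  fix x y assume "x \<in> \<int> + F" "y \<in> \<int> + F"
  then show "x + y \<in> \<int> + F" "x - y \<in> \<int> + F" "x * y \<in> \<int> + F"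
    using add_subgroup_add add_subgroup_diff add_subgroup_Ints_plus_F Ints_plus_F_mult_closed
    by blast+
qed

lemma is_conductor_Ints_plus: "is_conductor (max_order K) (\<int> + F) F"
  unfolding is_conductor_def
proof (intro conjI allI impI)
  show "O_ideal (max_order K) F"
    unfolding O_ideal_iff using F_subset_OK add_subgroup_F mult_mem_F by blast
  show "F \<subseteq> \<int> + F"
    by (rule F_subset_Ints_plus_F)
  fix I assume I: "O_ideal (max_order K) I \<and> I \<subseteq> \<int> + F"
  show "I \<subseteq> F"
  proof (rule ideal_subset_F)
    show "I \<subseteq> \<int> + F"
      using I by blast
    show "a * x \<in> I" if "a \<in> max_order K" "x \<in> I" for a x
      using I that unfolding O_ideal_iff by blast
  qed
qed

lemma grp_index_Ints_plus: "grp_index (max_order K) (\<int> + F) = f"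
  unfolding grp_index_eq_card_add_cosets by (rule card_add_cosets_Ints_plus_F)

lemma order_with_conductor_eq_Ints_plus:
  assumes "is_order K R" "grp_index (max_order K) R = f" "is_conductor (max_order K) R F"
  shows "R = \<int> + F"
proof (rule Ints_plus_F_unique)
  show "add_subgroup R"
    using assms(1) by (rule add_subgroup_if_is_order)
  show "R \<subseteq> max_order K" "1 \<in> R"
    using assms(1) unfolding is_order_def by blast+
  show "F \<subseteq> R"
    using assms(3) unfolding is_conductor_def by blast
  show "card (add_cosets (max_order K) R) = f"
    using assms(2) unfolding grp_index_eq_card_add_cosets .
qed

end

theorem proposition2p7:
  fixes K F :: "(complex^3) set" and f :: nat
  assumes "etale_cubic K"
    and "f > 0" and "squarefree f"
    and "\<forall>p. prime p \<and> p dvd f \<longrightarrow> \<not> prime_type3 K p"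
    and "O_ideal (max_order K) F"
    and "scaled_order f (max_order K) \<subseteq> F"
    and "grp_index (max_order K) F = f ^ 2"
  shows "\<forall>R. (is_order K R \<and> grp_index (max_order K) R = f \<and> is_conductor (max_order K) R F)
           \<longleftrightarrow> R = {of_int n + x | n x. x \<in> F}"
proof -
  have ideal: "square_index_ideal (max_order K) F f"
    using assms(1,3,5-7) by (rule square_index_ideal_max_order)
  have "{of_int n + x | n x. x \<in> F} = \<int> + F"
    by (auto simp: mem_Ints_plus_iff) blast
  then show ?thesis
    using order_with_conductor_eq_Ints_plus[OF ideal] is_order_Ints_plus[OF ideal]
      grp_index_Ints_plus[OF ideal] is_conductor_Ints_plus[OF ideal]
    by metis
qed

end
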